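(* Let $q\in(0,1]$, $\eta\in(0,1]$, $m,m^*,m_0>0$ and $R>0$. Let $\Psi_T\in\mathrm{GL}(|\mathcal J^{(0)}|)$, $T\in\mathbb T$, be a deterministic sequence of positive matrices. Suppose that there is a constant $D>0$ such that $$P\bigl(\hat\theta_T^{(0)}\ne0\bigr)<D\bigl(\|a_T\|^{m\eta}+c_T(m_0,R)\bigr)\quad\text{for every }T\in\mathbb T,$$ and that [A13] holds: $\|\Psi_T\|^{m^*}\bigl(\|a_T\|^{m\eta}+c_T(m_0,R)\bigr)\to0$ as $T\to\infty$. Then $$E\bigl[|\Psi_T\hat\theta_T^{(0)}|^{m^*}\bigr]\to0\quad\text{as }T\to\infty.$$
   Context: Let $\Theta\subset\mathbb R^{\mathsf p}$ be a bounded open set with closure $\overline\Theta$ and $\theta^*\in\Theta$. Let $(\Omega,\mathcal F,P)$ be a probability space, $\mathbb T\subset\mathbb R_{\ge0}$ with $\sup\mathbb T=\infty$. For each $T\in\mathbb T$, $\mathbb H_T:\Omega\times\overline\Theta\to\mathbb R$ is a random field continuous in $\theta$ for every $\omega$. The penalty is $p_T(\theta)=\sum_{j=1}^{\mathsf p}\xi_T^jp(\theta_j)$ with (possibly random) $\xi_T^j>0$ and $p:\mathbb R\to\mathbb R_{\ge0}$, $p(0)=0$; $\mathbb H^\dagger_T=\mathbb H_T-p_T$, and $\hat\theta_T:\Omega\to\overline\Theta$ is measurable with $\mathbb H^\dagger_T(\hat\theta_T)=\max_{\overline\Theta}\mathbb H^\dagger_T$. $\mathcal J^{(0)}=\{j:\theta^*_j=0\}$,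 $\mathcal J^{(1)}=\{j:\theta^*_j\ne0\}$; $x^{(0)}=(x_j)_{j\in\mathcal J^{(0)}}$, $A^{(00)}=(A_{ij})_{i,j\in\mathcal J^{(0)}}$. $a_T=\mathrm{diag}(\alpha_T^1,\dots,\alpha_T^{\mathsf p})$ is deterministic, invertible, with $\|a_T\|\to0$ ($\|\cdot\|$ spectral norm); $\mathbb U_T=\{u:\theta^*+a_Tu\in\overline\Theta\}$. $\tilde a_T$ is diagonal with $(\tilde a_T)_{jj}=(\xi_T^j)^{-1/q}$ for $j\in\mathcal J^{(0)}$ and $\alpha_T^j$ for $j\in\mathcal J^{(1)}$; $G_T=a_T^{-1}\tilde a_T$. $\mathsf c_{T,R}=\sup\frac{|\mathbb H_T(\theta^*+a_Tu)-\mathbb H_T(\theta^*+a_Tv)|}{|u-v|^q}$ over $u,v\in\mathbb U_T$, $u\ne v$, $|a_Tu|,|a_Tv|<R\|a_T\|^{1-\eta}$; $c_T(m_0,R)=E[|\mathsf c_{T,R}|^{m_0}\|G_T^{(00)}\|^{qm_0}]$ (possibly $\infty$). *)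

theory Defs
  imports "HOL-Probability.Probability"
begin

text \<open>Vectors in R^p are rendered as real^'p. The diagonal matrix a_T = diag(alpha_T^1..alpha_T^p)
 is given by its diagonal alpha T :: 'p => real.\<close>

definition diag_app :: "('p::finite \<Rightarrow> real) \<Rightarrow> real^'p \<Rightarrow> real^'p" where
  "diag_app d u = (\<chi> j. d j * u $ j)"

definition diag_norm :: "('p::finite \<Rightarrow> real) \<Rightarrow> real" where
  "diag_norm d = Max (range (\<lambda>j. \<bar>d j\<bar>))"

text \<open>A |J|x|J| matrix (entries Psi i j for i,j in J) acting on the J-subvector of x;
 the result is padded with zeros outside J.\<close>
definition sub_mat_app :: "('p::finite \<Rightarrow> 'p \<Rightarrow> real) \<Rightarrow> 'p set \<Rightarrow> real^'p \<Rightarrow> real^'p" where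
  "sub_mat_app Psi J x = (\<chi> i. if i \<in> J then (\<Sum>j\<in>J. Psi i j * x $ j) else 0)"

definition sub_mat_norm :: "('p::finite \<Rightarrow> 'p \<Rightarrow> real) \<Rightarrow> 'p set \<Rightarrow> real" where
  "sub_mat_norm Psi J = onorm (sub_mat_app Psi J)"

text \<open>Positive (definite, symmetric) matrix on index set J; this implies invertibility.\<close>
definition pos_def_on :: "('p::finite \<Rightarrow> 'p \<Rightarrow> real) \<Rightarrow> 'p set \<Rightarrow> bool" where
  "pos_def_on Psi J \<longleftrightarrow> (\<forall>i\<in>J. \<forall>j\<in>J. Psi i j = Psi j i) \<and>
     (\<forall>x::real^'p. (\<forall>j. j \<notin> J \<longrightarrow> x $ j = 0) \<and> x \<noteq> 0 \<longrightarrow> x \<bullet> sub_mat_app Psi J x > 0)"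

definition restr :: "'p::finite set \<Rightarrow> real^'p \<Rightarrow> real^'p" where
  "restr J x = (\<chi> j. if j \<in> J then x $ j else 0)"

definition epow :: "ennreal \<Rightarrow> real \<Rightarrow> ennreal" where
  "epow x r = (if x = \<infinity> then \<infinity> else ennreal (enn2real x powr r))"

definition hoelder_const ::
  "('p::finite \<Rightarrow> real) \<Rightarrow> (real^'p \<Rightarrow> real) \<Rightarrow> real^'p \<Rightarrow> (real^'p) set \<Rightarrow> real \<Rightarrow> real \<Rightarrow> real \<Rightarrow> ennreal" where
  "hoelder_const alpha H thstar Th q eta R =
     (SUP (u, v) \<in> {(u, v). thstar + diag_app alpha u \<in> closure Th \<and> thstar + diag_app alpha v \<in> closure Th
                        \<and> u \<noteq> v \<and> norm (diag_app alpha u) < R * diag_norm alpha powr (1 - eta)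
                        \<and> norm (diag_app alpha v) < R * diag_norm alpha powr (1 - eta)}.
        ennreal (\<bar>H (thstar + diag_app alpha u) - H (thstar + diag_app alpha v)\<bar> / norm (u - v) powr q))"

text \<open>The norm of G_T^(00), where (G_T)_jj = (xi_T^j)^(-1/q) / alpha_T^j for j in J^(0).\<close>
definition G00_norm :: "('p::finite \<Rightarrow> real) \<Rightarrow> ('p \<Rightarrow> real) \<Rightarrow> 'p set \<Rightarrow> real \<Rightarrow> ennreal" where
  "G00_norm alpha xi J q = (SUP j\<in>J. ennreal \<bar>xi j powr (- 1 / q) / alpha j\<bar>)"

definition cT :: "'a measure \<Rightarrow> ('p::finite \<Rightarrow> real) \<Rightarrow> ('a \<Rightarrow> real^'p \<Rightarrow> real) \<Rightarrow> ('a \<Rightarrow> 'p \<Rightarrow> real)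
     \<Rightarrow> real^'p \<Rightarrow> (real^'p) set \<Rightarrow> real \<Rightarrow> real \<Rightarrow> real \<Rightarrow> real \<Rightarrow> ennreal" where
  "cT M alpha H xi thstar Th q eta m0 R =
     (\<integral>\<^sup>+ \<omega>. epow (hoelder_const alpha (H \<omega>) thstar Th q eta R) m0
              * epow (G00_norm alpha (xi \<omega>) {j. thstar $ j = 0} q) (q * m0) \<partial>M)"

end

theory Submission
  imports Defs
begin

text \<open>Since \<open>\<Theta>\<close> is bounded by some \<open>B\<close>, the integrand \<open>|\<Psi>\<^sub>T \<theta>\<^sup>(\<^sup>0\<^sup>)|\<^sup>m\<^sup>*\<close> is at most
  \<open>(\<parallel>\<Psi>\<^sub>T\<parallel> B)\<^sup>m\<^sup>*\<close> and vanishes unless \<open>\<theta>\<^sup>(\<^sup>0\<^sup>) \<noteq> 0\<close>. So the moment is bounded by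
  \<open>B\<^sup>m\<^sup>* \<parallel>\<Psi>\<^sub>T\<parallel>\<^sup>m\<^sup>* P(\<theta>\<^sup>(\<^sup>0\<^sup>) \<noteq> 0) \<le> B\<^sup>m\<^sup>* D \<parallel>\<Psi>\<^sub>T\<parallel>\<^sup>m\<^sup>* (\<parallel>a\<^sub>T\<parallel>\<^sup>m\<^sup>\<eta> + c\<^sub>T(m\<^sub>0,R))\<close>,
  which tends to zero by [A13]. Beyond boundedness, measurability and these two estimates,
  none of the hypotheses (maximality of the estimator, positivity of \<open>\<Psi>\<^sub>T\<close>, ...) is needed.\<close>

lemma bounded_linear_sub_mat_app: "bounded_linear (sub_mat_app Psi J)"
proof -
  have "linear (sub_mat_app Psi J)"
    by (rule linearI)
       (auto simp: sub_mat_app_def vec_eq_iff sum.distrib algebra_simps sum_distrib_left)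
  then show ?thesis
    by (simp add: linear_conv_bounded_linear)
qed

lemma norm_sub_mat_app_le: "norm (sub_mat_app Psi J x) \<le> sub_mat_norm Psi J * norm x"
  unfolding sub_mat_norm_def by (rule onorm[OF bounded_linear_sub_mat_app])

lemma sub_mat_norm_nonneg: "0 \<le> sub_mat_norm Psi J"
  unfolding sub_mat_norm_def by (rule onorm_pos_le[OF bounded_linear_sub_mat_app])

lemma sub_mat_app_restr: "sub_mat_app Psi J (restr J x) = sub_mat_app Psi J x"
  unfolding sub_mat_app_def restr_def by (auto simp: vec_eq_iff intro!: sum.cong)

lemma sub_mat_app_eq_0_if_restr_eq_0: "restr J x = 0 \<Longrightarrow> sub_mat_app Psi J x = 0"
  by (metis sub_mat_app_restr bounded_linear_sub_mat_app bounded_linear.linear linear_0)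

lemma continuous_on_restr: "continuous_on UNIV (restr J)"
  unfolding restr_def
  by (intro continuous_on_vec_lambda, case_tac "j \<in> J") (auto intro!: continuous_intros)

lemma sets_restr_neq_0:
  assumes "f \<in> borel_measurable M"
  shows "{\<omega>\<in>space M. restr J (f \<omega>) \<noteq> 0} \<in> sets M"
proof -
  have "(\<lambda>\<omega>. restr J (f \<omega>)) \<in> borel_measurable M"
    using borel_measurable_continuous_onI[OF continuous_on_restr] assms
    by (rule measurable_compose[rotated])
  then show ?thesis
    by measurable
qed

lemma nn_integral_powr_le_emeasure_support:
  fixes f :: "'a \<Rightarrow> 'b::real_normed_vector"
  assumes S: "S \<in> sets M" and r: "0 < r"
    and vanish: "\<And>\<omega>. \<omega> \<in> space M \<Longrightarrow> \<omega> \<notin> S \<Longrightarrow> f \<omega> = 0"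
    and bound: "\<And>\<omega>. \<omega> \<in> space M \<Longrightarrow> norm (f \<omega>) \<le> C"
  shows "(\<integral>\<^sup>+ \<omega>. ennreal (norm (f \<omega>) powr r) \<partial>M) \<le> ennreal (C powr r) * emeasure M S"
proof -
  have "ennreal (norm (f \<omega>) powr r) \<le> ennreal (C powr r) * indicator S \<omega>"
    if "\<omega> \<in> space M" for \<omega>
  proof (cases "\<omega> \<in> S")
    case True
    then show ?thesis
      using bound[OF that] r by (simp add: powr_mono2)
  next
    case False
    then show ?thesis
      using vanish[OF that] by simp
  qed
  then have "(\<integral>\<^sup>+ \<omega>. ennreal (norm (f \<omega>) powr r) \<partial>M)
      \<le> (\<integral>\<^sup>+ \<omega>. ennreal (C powr r) * indicator S \<omega> \<partial>M)"
    by (intro nn_integral_mono) simp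
  also have "\<dots> = ennreal (C powr r) * emeasure M S"
    using S by (rule nn_integral_cmult_indicator)
  finally show ?thesis .
qed

lemma nn_integral_norm_sub_mat_app_powr_le:
  assumes f: "f \<in> borel_measurable M" and r: "0 < r"
    and bound: "\<And>\<omega>. \<omega> \<in> space M \<Longrightarrow> norm (f \<omega>) \<le> B"
  shows "(\<integral>\<^sup>+ \<omega>. ennreal (norm (sub_mat_app Psi J (f \<omega>)) powr r) \<partial>M)
    \<le> ennreal ((sub_mat_norm Psi J * B) powr r) * emeasure M {\<omega>\<in>space M. restr J (f \<omega>) \<noteq> 0}"
proof (rule nn_integral_powr_le_emeasure_support)
  fix \<omega>
  assume "\<omega> \<in> space M"
  have "norm (sub_mat_app Psi J (f \<omega>)) \<le> sub_mat_norm Psi J * norm (f \<omega>)"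
    by (rule norm_sub_mat_app_le)
  also have "\<dots> \<le> sub_mat_norm Psi J * B"
    using bound[OF \<open>\<omega> \<in> space M\<close>] sub_mat_norm_nonneg by (rule mult_left_mono)
  finally show "norm (sub_mat_app Psi J (f \<omega>)) \<le> sub_mat_norm Psi J * B" .
qed (use f r sets_restr_neq_0 sub_mat_app_eq_0_if_restr_eq_0 in auto)

lemma ennreal_tendsto_0_if_eventually_le_cmult:
  fixes f g :: "'b \<Rightarrow> ennreal"
  assumes "c < top" "\<forall>\<^sub>F x in F. f x \<le> c * g x" "(g \<longlongrightarrow> 0) F"
  shows "(f \<longlongrightarrow> 0) F"
proof (rule tendsto_sandwich[OF _ assms(2) tendsto_const])
  show "((\<lambda>x. c * g x) \<longlongrightarrow> 0) F"
    using ennreal_tendsto_cmult[OF assms(1,3)] by simp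
qed simp

theorem theorem8:
  fixes M :: "'a measure"
    and Th :: "(real^'p) set" and thstar :: "real^'p"
    and TT :: "real set"
    and H :: "real \<Rightarrow> 'a \<Rightarrow> real^'p \<Rightarrow> real"
    and xi :: "real \<Rightarrow> 'a \<Rightarrow> 'p \<Rightarrow> real"
    and p :: "real \<Rightarrow> real"
    and thhat :: "real \<Rightarrow> 'a \<Rightarrow> real^'p"
    and alpha :: "real \<Rightarrow> 'p \<Rightarrow> real"
    and Psi :: "real \<Rightarrow> 'p \<Rightarrow> 'p \<Rightarrow> real"
    and q eta m mstar m0 R D :: real
  assumes P: "prob_space M"
    and Th: "bounded Th" "open Th" "thstar \<in> Th"
    and TT: "TT \<subseteq> {0..}" "\<forall>x. \<exists>T\<in>TT. x < T"
    and Hcont: "\<forall>T\<in>TT. \<forall>\<omega>. continuous_on (closure Th) (H T \<omega>)"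
    and xi_pos: "\<forall>T\<in>TT. \<forall>\<omega>. \<forall>j. xi T \<omega> j > 0"
    and p_nonneg: "\<forall>x. p x \<ge> 0" and p0: "p 0 = 0"
    and thhat_meas: "\<forall>T\<in>TT. thhat T \<in> borel_measurable M"
    and thhat_in: "\<forall>T\<in>TT. \<forall>\<omega>. thhat T \<omega> \<in> closure Th"
    and thhat_max: "\<forall>T\<in>TT. \<forall>\<omega>. \<forall>\<theta>\<in>closure Th.
          H T \<omega> \<theta> - (\<Sum>j\<in>UNIV. xi T \<omega> j * p (\<theta> $ j))
            \<le> H T \<omega> (thhat T \<omega>) - (\<Sum>j\<in>UNIV. xi T \<omega> j * p (thhat T \<omega> $ j))"
    and alpha_ne: "\<forall>T\<in>TT. \<forall>j. alpha T j \<noteq> 0"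
    and alpha_lim: "((\<lambda>T. diag_norm (alpha T)) \<longlongrightarrow> 0) (at_top \<sqinter> principal TT)"
    and q: "0 < q" "q \<le> 1" and eta: "0 < eta" "eta \<le> 1"
    and pos: "m > 0" "mstar > 0" "m0 > 0" "R > 0"
    and Psi_pos: "\<forall>T\<in>TT. pos_def_on (Psi T) {j. thstar $ j = 0}"
    and D: "D > 0"
    and prob_bound: "\<forall>T\<in>TT.
          emeasure M {\<omega>\<in>space M. restr {j. thstar $ j = 0} (thhat T \<omega>) \<noteq> 0}
            < ennreal D * (ennreal (diag_norm (alpha T) powr (m * eta))
                           + cT M (alpha T) (H T) (xi T) thstar Th q eta m0 R)"
    and A13: "((\<lambda>T. ennreal (sub_mat_norm (Psi T) {j. thstar $ j = 0} powr mstar)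
                  * (ennreal (diag_norm (alpha T) powr (m * eta))
                     + cT M (alpha T) (H T) (xi T) thstar Th q eta m0 R))
               \<longlongrightarrow> 0) (at_top \<sqinter> principal TT)"
  shows "((\<lambda>T. \<integral>\<^sup>+ \<omega>. ennreal (norm (sub_mat_app (Psi T) {j. thstar $ j = 0} (thhat T \<omega>)) powr mstar) \<partial>M)
           \<longlongrightarrow> 0) (at_top \<sqinter> principal TT)"
proof -
  define J where "J = {j. thstar $ j = 0}"
  define N where "N T = sub_mat_norm (Psi T) J" for T
  define X where "X T = ennreal (diag_norm (alpha T) powr (m * eta))
                        + cT M (alpha T) (H T) (xi T) thstar Th q eta m0 R" for T
  obtain B where B: "0 < B" "\<forall>x\<in>closure Th. norm x \<le> B"
    using bounded_closure[OF Th(1)] unfolding bounded_pos by blast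
  have "(\<integral>\<^sup>+ \<omega>. ennreal (norm (sub_mat_app (Psi T) J (thhat T \<omega>)) powr mstar) \<partial>M)
      \<le> ennreal (B powr mstar * D) * (ennreal (N T powr mstar) * X T)" if T: "T \<in> TT" for T
  proof -
    have "(\<integral>\<^sup>+ \<omega>. ennreal (norm (sub_mat_app (Psi T) J (thhat T \<omega>)) powr mstar) \<partial>M)
        \<le> ennreal ((N T * B) powr mstar) * emeasure M {\<omega>\<in>space M. restr J (thhat T \<omega>) \<noteq> 0}"
      unfolding N_def using T thhat_meas thhat_in B(2) pos(2)
      by (intro nn_integral_norm_sub_mat_app_powr_le) auto
    also have "\<dots> \<le> ennreal ((N T * B) powr mstar) * (ennreal D * X T)"
      using prob_bound T unfolding X_def J_def by (intro mult_left_mono) auto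
    also have "\<dots> = ennreal (B powr mstar * D) * (ennreal (N T powr mstar) * X T)"
      by (simp only: powr_mult ennreal_mult'[OF powr_ge_zero] ennreal_mult''[OF powr_ge_zero] ac_simps)
    finally show ?thesis .
  qed
  then have bound: "\<forall>\<^sub>F T in at_top \<sqinter> principal TT.
      (\<integral>\<^sup>+ \<omega>. ennreal (norm (sub_mat_app (Psi T) J (thhat T \<omega>)) powr mstar) \<partial>M)
        \<le> ennreal (B powr mstar * D) * (ennreal (N T powr mstar) * X T)"
    by (auto simp: eventually_inf_principal)
  have lim: "((\<lambda>T. ennreal (N T powr mstar) * X T) \<longlongrightarrow> 0) (at_top \<sqinter> principal TT)"
    using A13 unfolding J_def N_def X_def .
  show ?thesis
    unfolding J_def[symmetric] by (intro ennreal_tendsto_0_if_eventually_le_cmult[OF _ bound lim]) simp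
qed

end
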